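(* Let $D\in\mathbb{D}^n_+$, $W\in\mathbb{R}^{n\times n}$, $u\in\mathbb{R}^n$, $A:=W-D$, and $\mathcal X=\{x\in\mathbb{R}^n: Dx\in[0,1]^n\}$. A point $x^\star\in\mathcal X$ is an equilibrium of the projected dynamical system $\dot x=\Pi_{\mathcal X}(x,Ax+u)$ (i.e. $\Pi_{\mathcal X}(x^\star,Ax^\star+u)=0$) if and only if it is an equilibrium of the linear-threshold network $\dot x=-Dx+[Wx+u]_0^1$ (i.e. $-Dx^\star+[Wx^\star+u]_0^1=0$).
   Context: $\mathbb{D}^n_+$ is the set of positive diagonal matrices; $[z]_0^1=\max(0,\min(z,1))$ elementwise. For $x\in\mathcal X$, $T_{\mathcal X}(x)$ is the tangent cone of $\mathcal X$ at $x$ and $\Pi_{\mathcal X}(x,v)=\arg\min_{y\in T_{\mathcal X}(x)}\|y-v\|^2$. *)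

theory Defs
  imports "HOL-Analysis.Analysis"
begin

definition pos_diag :: "real^'n^'n \<Rightarrow> bool" where
  "pos_diag D \<longleftrightarrow> (\<forall>i j. i \<noteq> j \<longrightarrow> D $ i $ j = 0) \<and> (\<forall>i. D $ i $ i > 0)"

definition clip01 :: "real^'n \<Rightarrow> real^'n" where
  "clip01 z = (\<chi> i. max 0 (min (z $ i) 1))"

definition tangent_cone :: "('a::real_normed_vector) set \<Rightarrow> 'a \<Rightarrow> 'a set" where
  "tangent_cone X x = closure (cone hull ((\<lambda>y. y - x) ` X))"

definition proj_tc :: "('a::euclidean_space) set \<Rightarrow> 'a \<Rightarrow> 'a \<Rightarrow> 'a" where
  "proj_tc X x v = closest_point (tangent_cone X x) v"

end

theory Submission
  imports Defs
begin

text \<open>The constraint set is the box \<open>[0, D\<^sup>-\<^sup>1 1]\<close>, and the projection of \<open>v\<close> onto the tangent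
  cone at \<open>x\<close> vanishes exactly when \<open>v\<close> lies in the normal cone, i.e. when \<open>v \<bullet> (y - x) \<le> 0\<close>
  for all \<open>y\<close> in the box. For a box this decouples into the coordinatewise complementarity
  conditions: \<open>v\<^sub>i > 0\<close> forces \<open>x\<^sub>i\<close> to the upper face and \<open>v\<^sub>i < 0\<close> to the lower face. With
  \<open>v = Wx + u - Dx\<close> and \<open>y\<^sub>i = D\<^sub>i\<^sub>i x\<^sub>i \<in> [0,1]\<close> these say precisely that \<open>y\<^sub>i\<close> is the clipping of
  \<open>(Wx + u)\<^sub>i\<close> to \<open>[0,1]\<close>.\<close>

lemma closest_point_eq_iff_dot:
  fixes S :: "'a::euclidean_space set"
  assumes "convex S" "closed S" "x \<in> S"
  shows "closest_point S a = x \<longleftrightarrow> (\<forall>y\<in>S. inner (a - x) (y - x) \<le> 0)"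
proof
  assume "closest_point S a = x"
  then show "\<forall>y\<in>S. inner (a - x) (y - x) \<le> 0"
    using closest_point_dot[OF assms(1,2)] by blast
next
  assume obtuse: "\<forall>y\<in>S. inner (a - x) (y - x) \<le> 0"
  have "dist a x \<le> dist a y" if "y \<in> S" for y
  proof -
    have "(norm (a - y))\<^sup>2 = (norm (a - x))\<^sup>2 - 2 * inner (a - x) (y - x) + (norm (y - x))\<^sup>2"
      by (simp add: power2_norm_eq_inner algebra_simps inner_commute)
    then have "(norm (a - x))\<^sup>2 \<le> (norm (a - y))\<^sup>2"
      using obtuse[rule_format, OF that] zero_le_power2[of "norm (y - x)"] by linarith
    then show ?thesis
      unfolding dist_norm by (rule power2_le_imp_le) simp
  qed
  then show "closest_point S a = x"
    using closest_point_unique[OF assms] by metis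
qed

lemma convex_tangent_cone: "convex X \<Longrightarrow> convex (tangent_cone X x)"
  unfolding tangent_cone_def
  by (intro convex_closure convex_cone_hull convex_translation_subtract)

lemma closed_tangent_cone: "closed (tangent_cone X x)"
  by (simp add: tangent_cone_def)

lemma diff_in_tangent_cone: "y \<in> X \<Longrightarrow> y - x \<in> tangent_cone X x"
  unfolding tangent_cone_def
  using closure_subset hull_subset by fastforce

lemma tangent_cone_dot_le_0_iff:
  "(\<forall>y\<in>tangent_cone X x. inner v y \<le> 0) \<longleftrightarrow> (\<forall>z\<in>X. inner v (z - x) \<le> 0)"
proof
  assume "\<forall>z\<in>X. inner v (z - x) \<le> 0"
  then have "cone hull ((\<lambda>z. z - x) ` X) \<subseteq> {y. inner v y \<le> 0}"
    by (auto simp: cone_hull_expl mult_nonneg_nonpos)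
  moreover have "closed {y. inner v y \<le> 0}"
    by (intro closed_Collect_le continuous_intros)
  ultimately have "tangent_cone X x \<subseteq> {y. inner v y \<le> 0}"
    unfolding tangent_cone_def by (rule closure_minimal)
  then show "\<forall>y\<in>tangent_cone X x. inner v y \<le> 0"
    by blast
qed (use diff_in_tangent_cone in blast)

lemma proj_tc_eq_0_iff:
  fixes X :: "'a::euclidean_space set"
  assumes "convex X" "x \<in> X"
  shows "proj_tc X x v = 0 \<longleftrightarrow> (\<forall>z\<in>X. inner v (z - x) \<le> 0)"
proof -
  have "0 \<in> tangent_cone X x"
    using diff_in_tangent_cone[OF assms(2), of x] by simp
  then show ?thesis
    unfolding proj_tc_def tangent_cone_dot_le_0_iff[symmetric]
    by (simp add: closest_point_eq_iff_dot convex_tangent_cone[OF assms(1)] closed_tangent_cone)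
qed

lemma inner_update_diff:
  fixes v x :: "real^'n"
  shows "inner v ((\<chi> j. if j = i then c else x $ j) - x) = v $ i * (c - x $ i)"
proof -
  have "inner v ((\<chi> j. if j = i then c else x $ j) - x)
        = (\<Sum>j\<in>UNIV. if j = i then v $ i * (c - x $ i) else 0)"
    unfolding inner_vec_def by (intro sum.cong) auto
  then show ?thesis
    by simp
qed

lemma cbox_normal_cone_iff:
  fixes a b x v :: "real^'n"
  assumes "x \<in> cbox a b"
  shows "(\<forall>z\<in>cbox a b. inner v (z - x) \<le> 0)
         \<longleftrightarrow> (\<forall>i. (0 < v $ i \<longrightarrow> x $ i = b $ i) \<and> (v $ i < 0 \<longrightarrow> x $ i = a $ i))"
proof
  assume normal: "\<forall>z\<in>cbox a b. inner v (z - x) \<le> 0"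
  have x_bounds: "a $ i \<le> x $ i" "x $ i \<le> b $ i" for i
    using assms by (simp_all add: mem_box_cart)
  have normal_coord: "v $ i * (c - x $ i) \<le> 0" if "a $ i \<le> c" "c \<le> b $ i" for i c
  proof -
    have "(\<chi> j. if j = i then c else x $ j) \<in> cbox a b"
      using that x_bounds by (simp add: mem_box_cart)
    then have "inner v ((\<chi> j. if j = i then c else x $ j) - x) \<le> 0"
      using normal by blast
    then show ?thesis
      by (simp only: inner_update_diff)
  qed
  show "\<forall>i. (0 < v $ i \<longrightarrow> x $ i = b $ i) \<and> (v $ i < 0 \<longrightarrow> x $ i = a $ i)"
  proof (intro allI conjI impI)
    fix i
    show "x $ i = b $ i" if "0 < v $ i"
      using that normal_coord[of i "b $ i"] x_bounds[of i] by (auto simp: mult_le_0_iff)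
    show "x $ i = a $ i" if "v $ i < 0"
      using that normal_coord[of i "a $ i"] x_bounds[of i] by (auto simp: mult_le_0_iff)
  qed
next
  assume faces: "\<forall>i. (0 < v $ i \<longrightarrow> x $ i = b $ i) \<and> (v $ i < 0 \<longrightarrow> x $ i = a $ i)"
  show "\<forall>z\<in>cbox a b. inner v (z - x) \<le> 0"
  proof
    fix z assume "z \<in> cbox a b"
    then have "v $ i * (z $ i - x $ i) \<le> 0" for i
      using faces[rule_format, of i]
      by (cases "v $ i" "0 :: real" rule: linorder_cases)
         (auto simp: mem_box_cart mult_nonneg_nonpos mult_nonpos_nonneg)
    then show "inner v (z - x) \<le> 0"
      by (simp add: inner_vec_def sum_nonpos)
  qed
qed

lemma eq_clip_iff_complementarity:
  fixes y z :: real
  assumes "0 \<le> y" "y \<le> 1"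
  shows "y = max 0 (min z 1) \<longleftrightarrow> (0 < z - y \<longrightarrow> y = 1) \<and> (z - y < 0 \<longrightarrow> y = 0)"
  using assms by auto

lemma pos_diag_mult_vec:
  assumes "pos_diag D"
  shows "D *v x = (\<chi> i. D $ i $ i * x $ i)"
proof -
  have "(\<Sum>j\<in>UNIV. D $ i $ j * x $ j) = (\<Sum>j\<in>UNIV. if j = i then D $ i $ i * x $ i else 0)" for i
    using assms unfolding pos_diag_def by (intro sum.cong) auto
  then show ?thesis
    by (simp add: vec_eq_iff matrix_vector_mult_def)
qed

lemma pos_diag_unit_box:
  assumes "pos_diag D"
  shows "{x. \<forall>i. (D *v x) $ i \<in> {0..1}} = cbox 0 (\<chi> i. 1 / D $ i $ i)"
proof -
  have "D $ i $ i * t \<in> {0..1} \<longleftrightarrow> 0 \<le> t \<and> t \<le> 1 / D $ i $ i" for i t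
  proof -
    have "0 < D $ i $ i"
      using assms by (simp add: pos_diag_def)
    then show ?thesis
      by (auto simp: zero_le_mult_iff pos_le_divide_eq mult.commute)
  qed
  then show ?thesis
    by (auto simp: pos_diag_mult_vec[OF assms] mem_box_cart)
qed

theorem proposition4:
  fixes D W :: "real^'n^'n" and u xs :: "real^'n"
  assumes "pos_diag D"
    and "xs \<in> {x. \<forall>i. (D *v x) $ i \<in> {0..1}}"
  shows "proj_tc {x. \<forall>i. (D *v x) $ i \<in> {0..1}} xs ((W - D) *v xs + u) = 0
         \<longleftrightarrow> - (D *v xs) + clip01 (W *v xs + u) = 0"
proof -
  let ?b = "\<chi> i. 1 / D $ i $ i"
  let ?v = "(W - D) *v xs + u" and ?z = "W *v xs + u"
  note X_box = pos_diag_unit_box[OF assms(1)]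
  have diag_pos: "0 < D $ i $ i" for i
    using assms(1) by (simp add: pos_diag_def)
  have xs_box: "xs \<in> cbox 0 ?b"
    using assms(2) unfolding X_box .
  have DX_bounds: "0 \<le> D $ i $ i * xs $ i" "D $ i $ i * xs $ i \<le> 1" for i
    using assms(2) by (simp_all add: pos_diag_mult_vec[OF assms(1)])
  have v_eq: "?v $ i = ?z $ i - D $ i $ i * xs $ i" for i
    by (simp add: matrix_vector_mult_diff_rdistrib pos_diag_mult_vec[OF assms(1)])
  have faces_eq:
    "xs $ i = ?b $ i \<longleftrightarrow> D $ i $ i * xs $ i = 1"
    "xs $ i = 0 $ i \<longleftrightarrow> D $ i $ i * xs $ i = 0" for i
    using diag_pos[of i] by (auto simp: field_simps)
  have "proj_tc (cbox 0 ?b) xs ?v = 0 \<longleftrightarrow> (\<forall>z\<in>cbox 0 ?b. inner ?v (z - xs) \<le> 0)"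
    by (rule proj_tc_eq_0_iff[OF convex_box(1) xs_box])
  also have "\<dots> \<longleftrightarrow> (\<forall>i. (0 < ?v $ i \<longrightarrow> xs $ i = ?b $ i) \<and> (?v $ i < 0 \<longrightarrow> xs $ i = 0 $ i))"
    by (rule cbox_normal_cone_iff[OF xs_box])
  also have "\<dots> \<longleftrightarrow> (\<forall>i. D $ i $ i * xs $ i = max 0 (min (?z $ i) 1))"
    by (simp only: faces_eq v_eq eq_clip_iff_complementarity[OF DX_bounds])
  also have "\<dots> \<longleftrightarrow> - (D *v xs) + clip01 ?z = 0"
    by (auto simp: vec_eq_iff clip01_def pos_diag_mult_vec[OF assms(1)])
  finally show ?thesis
    unfolding X_box .
qed

end
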